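(* If a Banach space $X$ has a seminormalized quasisubsymmetric (Schauder) basis, then $\ell_\infty$ embeds isomorphically into $\mathcal{L}(X^* )$.
   Context: $X^*$ is the dual of $X$ and $\mathcal{L}(Y)$ is the space of bounded linear operators on $Y$ with the operator norm. A sequence $(e_n)$ is seminormalized if $0<\inf_n\|e_n\|\le\sup_n\|e_n\|<\infty$. For basic sequences, $(x_n)$ dominates $(y_n)$ if there is $C>0$ with $\|\sum a_ny_n\|\le C\|\sum a_nx_n\|$ for all finitely supported scalar sequences $(a_n)$. A basic sequence $(e_n)$ is quasisubsymmetric if for any two increasing sequences $(k_n),(\ell_n)$ of positive integers with $k_n\le\ell_n$ for all $n$, $(e_{k_n})$ dominates $(e_{\ell_n})$. *)

theory Defs
  imports "HOL-Analysis.Analysis"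
begin

definition schauder_basis :: "(nat \<Rightarrow> 'a::real_normed_vector) \<Rightarrow> bool" where
  "schauder_basis e \<longleftrightarrow> (\<forall>x. \<exists>!a::nat \<Rightarrow> real. (\<lambda>n. a n *\<^sub>R e n) sums x)"

definition seminormalized :: "(nat \<Rightarrow> 'a::real_normed_vector) \<Rightarrow> bool" where
  "seminormalized e \<longleftrightarrow> (\<exists>a b. 0 < a \<and> (\<forall>n. a \<le> norm (e n) \<and> norm (e n) \<le> b))"

definition dominates :: "(nat \<Rightarrow> 'a::real_normed_vector) \<Rightarrow> (nat \<Rightarrow> 'a) \<Rightarrow> bool" where
  "dominates x y \<longleftrightarrow> (\<exists>C>0. \<forall>(a::nat \<Rightarrow> real) N.
      norm (\<Sum>n<N. a n *\<^sub>R y n) \<le> C * norm (\<Sum>n<N. a n *\<^sub>R x n))"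

definition quasisubsymmetric :: "(nat \<Rightarrow> 'a::real_normed_vector) \<Rightarrow> bool" where
  "quasisubsymmetric e \<longleftrightarrow> (\<forall>k l::nat \<Rightarrow> nat. strict_mono k \<longrightarrow> strict_mono l \<longrightarrow>
      (\<forall>n. k n \<le> l n) \<longrightarrow> dominates (e \<circ> k) (e \<circ> l))"

definition embeds_isomorphically :: "('a::real_normed_vector \<Rightarrow> 'b::real_normed_vector) \<Rightarrow> bool" where
  "embeds_isomorphically T \<longleftrightarrow> bounded_linear T \<and> (\<exists>c>0. \<forall>x. c * norm x \<le> norm (T x))"

end

theory Submission
  imports Defs
begin

(*
  The seminorm q x = sup_N |P_N x| of the basis projections P_N is countably subadditive,
  so by Zabreiko's lemma (a Baire category argument) q <= beta |.|. Hence the coefficient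
  functionals are bounded, uniformly because (e_n) is seminormalized.

  For every 0-1 sequence w we have 2j <= 2j + w_j, so quasisubsymmetry makes (e_(2j+w_j))
  dominated by (e_(2j)). A diagonal argument over the Cantor space makes the constant uniform
  on a cylinder; shifting past its prefix of length M makes it uniform in w. Taking
  differences and convex combinations, and using that (e_i) dominates (e_(2(i+M))), the
  diagonal operators D_t : e_i |-> t_i (e_(2(i+M)+1) - e_(2(i+M))) have norm at most
  G |t|_infty. Then t |-> D_t^* is a bounded linear map from l_infty into the operators on
  the dual of X, and it is bounded below because e*_(2(j+M)) (D_t e_j) = - t_j.
*)

section \<open>Zabreiko's lemma\<close>

lemma Baire_sublevel_closure_interior:
  fixes f :: "'a::banach \<Rightarrow> real"
  shows "\<exists>m::nat. interior (closure {x. f x \<le> real m}) \<noteq> {}"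
proof (rule ccontr)
  define B where "B m = closure {x. f x \<le> real m}" for m :: nat
  assume "\<not> ?thesis"
  then have empty: "interior (B m) = {}" for m
    by (simp add: B_def)
  have "euclidean interior_of \<Union>(range B) = {}"
  proof (rule Baire_category_alt)
    show "completely_metrizable_space (euclidean::'a topology) \<or>
        locally_compact_space (euclidean::'a topology) \<and> regular_space (euclidean::'a topology)"
      by (simp add: completely_metrizable_space_euclidean)
    show "countable (range B)" by simp
    fix T assume "T \<in> range B"
    then obtain m where "T = B m" by blast
    then show "closedin euclidean T \<and> euclidean interior_of T = {}"
      using empty[of m] by (simp add: B_def flip: closed_closedin)
  qed
  moreover have "\<Union>(range B) = UNIV"
  proof (intro set_eqI iffI UNIV_I)
    fix x
    obtain m :: nat where "f x \<le> real m" using real_arch_simple by blast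
    then have "x \<in> B m"
      unfolding B_def by (intro closure_subset[THEN subsetD]) simp
    then show "x \<in> \<Union>(range B)" by (rule UN_I[OF UNIV_I])
  qed
  ultimately show False by simp
qed

lemma approximation_from_dense_sublevel:
  fixes q :: "'a::real_normed_vector \<Rightarrow> real"
  assumes diff: "\<And>x y. q (x - y) \<le> q x + q y"
    and ball: "ball x0 \<epsilon> \<subseteq> closure {x. q x \<le> c}" and "norm y < \<epsilon>" "0 < \<delta>"
  obtains z where "q z \<le> 2 * c" "norm (y - z) < \<delta>"
proof -
  have "0 < \<epsilon>" using \<open>norm y < \<epsilon>\<close> norm_ge_zero[of y] by linarith
  then have "x0 \<in> ball x0 \<epsilon>" "x0 + y \<in> ball x0 \<epsilon>"
    using \<open>norm y < \<epsilon>\<close> by (simp_all add: dist_norm)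
  then have "x0 \<in> closure {x. q x \<le> c}" "x0 + y \<in> closure {x. q x \<le> c}"
    using ball by blast+
  then obtain u v where u: "q u \<le> c" "dist u (x0 + y) < \<delta>/2" and v: "q v \<le> c" "dist v x0 < \<delta>/2"
    unfolding closure_approachable using \<open>0 < \<delta>\<close> by (metis half_gt_zero mem_Collect_eq)
  have "y - (u - v) = (x0 + y - u) - (x0 - v)" by (simp add: algebra_simps)
  then have "norm (y - (u - v)) \<le> norm (x0 + y - u) + norm (x0 - v)"
    by (metis norm_triangle_ineq4)
  also have "\<dots> < \<delta>" using u v by (simp add: dist_norm norm_minus_commute)
  finally have "norm (y - (u - v)) < \<delta>" .
  moreover have "q (u - v) \<le> 2 * c" using diff[of u v] u v by linarith
  ultimately show thesis by (rule that[rotated])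
qed

lemma seminorm_approximation:
  fixes q :: "'a::banach \<Rightarrow> real"
  assumes diff: "\<And>x y. q (x - y) \<le> q x + q y"
    and scale: "\<And>c x. q (c *\<^sub>R x) = \<bar>c\<bar> * q x"
  obtains L where "0 \<le> L" "\<And>y \<delta>. 0 < \<delta> \<Longrightarrow> \<exists>z. q z \<le> L * norm y \<and> norm (y - z) \<le> \<delta>"
proof -
  obtain m :: nat and x0 where "x0 \<in> interior (closure {x. q x \<le> m})"
    using Baire_sublevel_closure_interior[of q] by blast
  then obtain \<epsilon> where \<epsilon>: "0 < \<epsilon>" "ball x0 \<epsilon> \<subseteq> closure {x. q x \<le> m}"
    by (meson mem_interior)
  define L where "L = 4 * m / \<epsilon>"
  have "\<exists>z. q z \<le> L * norm y \<and> norm (y - z) \<le> \<delta>" if "0 < \<delta>" for y \<delta>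
  proof (cases "y = 0")
    case True
    then show ?thesis using scale[of 0 0] \<open>0 < \<delta>\<close> by (intro exI[of _ 0]) auto
  next
    case False
    define s where "s = \<epsilon> / (2 * norm y)"
    have s: "0 < s" using False \<epsilon> by (simp add: s_def)
    have "norm (s *\<^sub>R y) < \<epsilon>" using False \<epsilon> by (simp add: s_def)
    moreover have "0 < s * \<delta>" using s \<open>0 < \<delta>\<close> by simp
    ultimately obtain z where z: "q z \<le> 2 * real m" "norm (s *\<^sub>R y - z) < s * \<delta>"
      by (rule approximation_from_dense_sublevel[OF diff \<epsilon>(2)])
    have "q (inverse s *\<^sub>R z) = inverse s * q z" using s by (simp add: scale)
    also have "\<dots> \<le> L * norm y"
      using z s False \<epsilon> by (simp add: s_def L_def field_simps)
    finally have "q (inverse s *\<^sub>R z) \<le> L * norm y" .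
    moreover have "y - inverse s *\<^sub>R z = inverse s *\<^sub>R (s *\<^sub>R y - z)"
      using s by (simp add: algebra_simps)
    then have "norm (y - inverse s *\<^sub>R z) = inverse s * norm (s *\<^sub>R y - z)"
      using s by simp
    moreover have "inverse s * norm (s *\<^sub>R y - z) \<le> \<delta>"
      using z s by (simp add: field_simps)
    ultimately show ?thesis by auto
  qed
  moreover have "0 \<le> L" using \<epsilon> by (simp add: L_def)
  ultimately show thesis using that by blast
qed

lemma successive_approximation_series:
  fixes q :: "'a::real_normed_vector \<Rightarrow> real"
  assumes approx: "\<And>y \<delta>. 0 < \<delta> \<Longrightarrow> \<exists>z. q z \<le> L * norm y \<and> norm (y - z) \<le> \<delta>"
    and "0 \<le> L" and "y \<noteq> 0"
  obtains z where "z sums y" "\<And>k. q (z k) \<le> L * norm y * (1/2)^k"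
proof -
  have "\<forall>w k. \<exists>z. q z \<le> L * norm w \<and> norm (w - z) \<le> norm y * (1/2)^Suc k"
    using approx \<open>y \<noteq> 0\<close> by (intro allI approx) simp
  then obtain Z where Z: "\<And>w k. q (Z w k) \<le> L * norm w"
    "\<And>w k. norm (w - Z w k) \<le> norm y * (1/2)^Suc k"
    by metis
  define r where "r = rec_nat y (\<lambda>k w. w - Z w k)"
  have r0: "r 0 = y" and rSuc: "\<And>k. r (Suc k) = r k - Z (r k) k"
    by (simp_all add: r_def)
  have norm_r: "norm (r k) \<le> norm y * (1/2)^k" for k
    using Z(2)[of "r (k - 1)" "k - 1"] by (cases k) (simp_all add: r0 rSuc)
  define z where "z k = Z (r k) k" for k
  have partial_sums: "(\<Sum>i<k. z i) = y - r k" for k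
    by (induction k) (simp_all add: r0 rSuc z_def)
  have "(\<lambda>k. norm y * (1/2::real)^k) \<longlonglongrightarrow> 0"
    by (intro tendsto_mult_right_zero LIMSEQ_power_zero) simp
  then have "r \<longlonglongrightarrow> 0"
    by (rule Lim_null_comparison[OF always_eventually[OF allI[OF norm_r]]])
  then have "(\<lambda>k. y - r k) \<longlonglongrightarrow> y"
    using tendsto_diff[OF tendsto_const[of y]] by fastforce
  then have "z sums y"
    unfolding sums_def partial_sums .
  moreover have "q (z k) \<le> L * norm y * (1/2)^k" for k
    using Z(1)[of "r k" k] mult_left_mono[OF norm_r[of k] \<open>0 \<le> L\<close>]
    by (simp add: z_def mult.assoc)
  ultimately show thesis by (rule that)
qed

lemma countably_subadditive_seminorm_bounded:
  fixes q :: "'a::banach \<Rightarrow> real"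
  assumes diff: "\<And>x y. q (x - y) \<le> q x + q y"
    and scale: "\<And>c x. q (c *\<^sub>R x) = \<bar>c\<bar> * q x"
    and series: "\<And>z y. z sums y \<Longrightarrow> summable (\<lambda>k. q (z k)) \<Longrightarrow> q y \<le> (\<Sum>k. q (z k))"
  obtains \<beta> where "0 < \<beta>" "\<And>x. q x \<le> \<beta> * norm x"
proof -
  have nonneg: "0 \<le> q x" for x
    using diff[of x x] scale[of 0 x] by simp
  obtain L where L: "0 \<le> L" "\<And>y \<delta>. 0 < \<delta> \<Longrightarrow> \<exists>z. q z \<le> L * norm y \<and> norm (y - z) \<le> \<delta>"
    using seminorm_approximation[OF diff scale] by blast
  have "q y \<le> 2 * L * norm y" for y
  proof (cases "y = 0")
    case True
    then show ?thesis using scale[of 0 0] by simp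
  next
    case False
    then obtain z where z: "z sums y" "\<And>k. q (z k) \<le> L * norm y * (1/2)^k"
      using successive_approximation_series[OF L(2) L(1)] by blast
    have geometric: "(\<lambda>k. L * norm y * (1/2::real)^k) sums (2 * L * norm y)"
      using sums_mult[OF geometric_sums[of "1/2::real"], of "L * norm y"] by (simp add: mult_ac)
    have "summable (\<lambda>k. q (z k))"
      by (rule summable_comparison_test'[OF sums_summable[OF geometric]]) (simp add: nonneg z(2))
    then have "q y \<le> (\<Sum>k. q (z k))" by (rule series[OF z(1)])
    also have "\<dots> \<le> 2 * L * norm y"
      using suminf_le[OF z(2) \<open>summable (\<lambda>k. q (z k))\<close> sums_summable[OF geometric]]
        sums_unique[OF geometric] by simp
    finally show ?thesis .
  qed
  then have "q x \<le> (2 * L + 1) * norm x" for x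
    by (smt (verit) mult_right_mono norm_ge_zero)
  moreover have "0 < 2 * L + 1" using L(1) by simp
  ultimately show thesis using that by blast
qed

section \<open>Schauder bases\<close>

text \<open>Tannery's theorem; the library version \<open>tannerys_theorem\<close> needs a normed algebra.\<close>

lemma tendsto_suminf_dominated:
  fixes F :: "nat \<Rightarrow> nat \<Rightarrow> 'a::banach"
  assumes lim: "\<And>k. (\<lambda>N. F N k) \<longlonglongrightarrow> f k"
    and bound: "\<And>N k. norm (F N k) \<le> M k" and "summable M"
  shows "(\<lambda>N. \<Sum>k. F N k) \<longlonglongrightarrow> (\<Sum>k. f k)"
proof (rule swap_uniform_limit')
  show "\<forall>\<^sub>F K in sequentially. (\<lambda>N. \<Sum>k<K. F N k) \<longlonglongrightarrow> (\<Sum>k<K. f k)"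
    by (intro always_eventually allI tendsto_sum lim)
  have f_bound: "norm (f k) \<le> M k" for k
    using tendsto_norm[OF lim] by (rule LIMSEQ_le_const2) (simp add: bound)
  have "summable f"
    by (rule summable_comparison_test'[OF \<open>summable M\<close> f_bound])
  then show "(\<lambda>K. \<Sum>k<K. f k) \<longlonglongrightarrow> (\<Sum>k. f k)"
    by (rule summable_LIMSEQ)
  show "uniform_limit UNIV (\<lambda>K N. \<Sum>k<K. F N k) (\<lambda>N. \<Sum>k. F N k) sequentially"
    using Weierstrass_m_test[of UNIV "\<lambda>k N. F N k" M] bound \<open>summable M\<close> by simp
qed auto

lemma sum_atLeastLessThan_as_lessThan:
  fixes v :: "nat \<Rightarrow> 'a::real_vector"
  shows "(\<Sum>i=m..<n. a i *\<^sub>R v i) = (\<Sum>i<n. (if m \<le> i then a i else 0) *\<^sub>R v i)"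
proof -
  have "(\<Sum>i<n. (if m \<le> i then a i else 0) *\<^sub>R v i) = (\<Sum>i<n. if m \<le> i then a i *\<^sub>R v i else 0)"
    by (intro sum.cong) auto
  also have "\<dots> = (\<Sum>i\<in>{i \<in> {..<n}. m \<le> i}. a i *\<^sub>R v i)"
    by (rule sum.inter_filter[symmetric]) simp
  also have "{i \<in> {..<n}. m \<le> i} = {m..<n}" by auto
  finally show ?thesis by simp
qed

locale schauder =
  fixes e :: "nat \<Rightarrow> 'a::banach"
  assumes schauder_basis: "schauder_basis e"
begin

definition coeff :: "'a \<Rightarrow> nat \<Rightarrow> real" where
  "coeff x = (THE a. (\<lambda>n. a n *\<^sub>R e n) sums x)"

lemma ex1_expansion: "\<exists>!a. (\<lambda>n. a n *\<^sub>R e n) sums x"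
  using schauder_basis unfolding schauder_basis_def by blast

lemma coeff_sums: "(\<lambda>n. coeff x n *\<^sub>R e n) sums x"
  unfolding coeff_def by (rule theI'[OF ex1_expansion])

lemma coeff_unique: "(\<lambda>n. a n *\<^sub>R e n) sums x \<Longrightarrow> a = coeff x"
  unfolding coeff_def by (rule the1_equality[OF ex1_expansion, symmetric])

lemma coeff_add: "coeff (x + y) n = coeff x n + coeff y n"
proof -
  have "(\<lambda>n. (coeff x n + coeff y n) *\<^sub>R e n) sums (x + y)"
    using sums_add[OF coeff_sums coeff_sums] by (simp add: scaleR_add_left)
  then show ?thesis by (simp add: coeff_unique[symmetric])
qed

lemma coeff_scaleR: "coeff (c *\<^sub>R x) n = c * coeff x n"
proof -
  have "(\<lambda>n. (c * coeff x n) *\<^sub>R e n) sums (c *\<^sub>R x)"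
    using sums_scaleR_right[OF coeff_sums, of c x] by simp
  then show ?thesis by (simp add: coeff_unique[symmetric])
qed

lemma coeff_diff: "coeff (x - y) n = coeff x n - coeff y n"
  using coeff_add[of x "- y" n] coeff_scaleR[of "- 1" y n] by simp

lemma coeff_basis: "coeff (e m) n = (if n = m then 1 else 0)"
proof -
  have "(\<lambda>n. (if n = m then 1 else 0) *\<^sub>R e n) = (\<lambda>n. if n = m then e n else 0)"
    by auto
  then have "(\<lambda>n. (if n = m then 1 else 0) *\<^sub>R e n) sums e m"
    using sums_single[of m e] by simp
  then show ?thesis by (simp add: coeff_unique[symmetric])
qed

definition proj :: "nat \<Rightarrow> 'a \<Rightarrow> 'a" where
  "proj N x = (\<Sum>n<N. coeff x n *\<^sub>R e n)"

lemma proj_tendsto: "(\<lambda>N. proj N x) \<longlonglongrightarrow> x"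
  using coeff_sums[of x] unfolding sums_def proj_def .

lemma proj_diff: "proj N (x - y) = proj N x - proj N y"
  by (simp add: proj_def coeff_diff scaleR_diff_left sum_subtractf)

lemma proj_scaleR: "proj N (c *\<^sub>R x) = c *\<^sub>R proj N x"
  by (simp add: proj_def coeff_scaleR scaleR_sum_right)

lemma proj_Suc_diff: "proj (Suc n) x - proj n x = coeff x n *\<^sub>R e n"
  by (simp add: proj_def)

definition proj_sup :: "'a \<Rightarrow> real" where
  "proj_sup x = (SUP N. norm (proj N x))"

lemma norm_proj_le_proj_sup: "norm (proj N x) \<le> proj_sup x"
proof -
  have "bounded (range (\<lambda>N. proj N x))"
    using proj_tendsto by (intro convergent_imp_bounded) (auto simp: convergent_def)
  then have "bdd_above (range (\<lambda>N. norm (proj N x)))"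
    by (simp add: bounded_iff bdd_above_def)
  then show ?thesis unfolding proj_sup_def by (rule cSUP_upper[OF UNIV_I])
qed

lemma proj_sup_least: "(\<And>N. norm (proj N x) \<le> c) \<Longrightarrow> proj_sup x \<le> c"
  unfolding proj_sup_def by (rule cSUP_least) auto

lemma proj_sup_diff: "proj_sup (x - y) \<le> proj_sup x + proj_sup y"
  by (rule proj_sup_least)
    (metis proj_diff add_mono norm_triangle_ineq4 order_trans norm_proj_le_proj_sup)

lemma proj_sup_scaleR: "proj_sup (c *\<^sub>R x) = \<bar>c\<bar> * proj_sup x"
proof (cases "c = 0")
  case True
  then show ?thesis by (simp add: proj_sup_def proj_def coeff_scaleR[of 0, simplified])
next
  case False
  have "proj_sup (c *\<^sub>R x) \<le> \<bar>c\<bar> * proj_sup x"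
    by (rule proj_sup_least) (simp add: proj_scaleR mult_left_mono norm_proj_le_proj_sup)
  moreover have "\<bar>c\<bar> * proj_sup x \<le> proj_sup (c *\<^sub>R x)"
  proof -
    have "norm (proj N x) \<le> proj_sup (c *\<^sub>R x) / \<bar>c\<bar>" for N
      using norm_proj_le_proj_sup[of N "c *\<^sub>R x"] False by (simp add: proj_scaleR field_simps)
    then have "proj_sup x \<le> proj_sup (c *\<^sub>R x) / \<bar>c\<bar>" by (rule proj_sup_least)
    then show ?thesis using False by (simp add: field_simps)
  qed
  ultimately show ?thesis by simp
qed

lemma basis_nonzero: "e n \<noteq> 0"
proof
  assume "e n = 0"
  then have "(\<lambda>m. (if m = n then 1 else 0) *\<^sub>R e m) = (\<lambda>_. 0)"
    by (intro ext) simp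
  then have "(\<lambda>m. if m = n then 1 else 0) = coeff 0"
    by (intro coeff_unique) simp
  moreover have "(\<lambda>_. 0) = coeff 0"
    by (intro coeff_unique) simp
  ultimately have "(\<lambda>m. if m = n then 1 else 0) = (\<lambda>_. 0::real)" by simp
  then have "(if n = n then 1 else 0) = (0::real)" by (rule fun_cong)
  then show False by simp
qed

lemma abs_coeff_le_proj_sup: "\<bar>coeff x n\<bar> * norm (e n) \<le> 2 * proj_sup x"
proof -
  have "\<bar>coeff x n\<bar> * norm (e n) = norm (proj (Suc n) x - proj n x)"
    by (simp add: proj_Suc_diff)
  also have "\<dots> \<le> proj_sup x + proj_sup x"
    by (metis add_mono norm_triangle_ineq4 order_trans norm_proj_le_proj_sup)
  finally show ?thesis by simp
qed

lemma proj_sup_suminf_le: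
  assumes z: "z sums y" and summable: "summable (\<lambda>k. proj_sup (z k))"
  shows "proj_sup y \<le> (\<Sum>k. proj_sup (z k))"
proof -
  have "summable (\<lambda>k. coeff (z k) n)" for n
  proof (rule summable_comparison_test'[where N = 0])
    show "summable (\<lambda>k. 2 * proj_sup (z k) / norm (e n))"
      using summable by (intro summable_divide summable_mult)
    show "norm (coeff (z k) n) \<le> 2 * proj_sup (z k) / norm (e n)" for k
      using abs_coeff_le_proj_sup[of "z k" n] basis_nonzero[of n] by (simp add: field_simps)
  qed
  then have "(\<lambda>k. coeff (z k) n) sums (\<Sum>k. coeff (z k) n)" for n
    by (rule summable_sums)
  then have proj_sums: "(\<lambda>k. proj N (z k)) sums (\<Sum>n<N. (\<Sum>k. coeff (z k) n) *\<^sub>R e n)" for N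
    unfolding proj_def by (intro sums_sum sums_scaleR_left)
  have "(\<lambda>N. \<Sum>k. proj N (z k)) \<longlonglongrightarrow> (\<Sum>k. z k)"
    using proj_tendsto norm_proj_le_proj_sup summable by (rule tendsto_suminf_dominated)
  moreover have "(\<Sum>k. proj N (z k)) = (\<Sum>n<N. (\<Sum>k. coeff (z k) n) *\<^sub>R e n)" for N
    using proj_sums by (rule sums_unique[symmetric])
  ultimately have "(\<lambda>n. (\<Sum>k. coeff (z k) n) *\<^sub>R e n) sums y"
    using sums_unique[OF z] by (simp add: sums_def)
  then have "proj N y = (\<Sum>k. proj N (z k))" for N
    using sums_unique[OF proj_sums[of N]] by (simp add: proj_def coeff_unique[symmetric])
  then have "norm (proj N y) \<le> (\<Sum>k. proj_sup (z k))" for N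
    using norm_suminf_le[OF norm_proj_le_proj_sup summable] by simp
  then show ?thesis by (rule proj_sup_least)
qed

lemma basis_constant:
  obtains \<beta> where "0 < \<beta>" "\<And>x. proj_sup x \<le> \<beta> * norm x"
  using countably_subadditive_seminorm_bounded[OF proj_sup_diff proj_sup_scaleR proj_sup_suminf_le]
  by blast

lemma abs_coeff_le_norm:
  obtains \<beta> where "0 < \<beta>" "\<And>x n. \<bar>coeff x n\<bar> * norm (e n) \<le> \<beta> * norm x"
proof -
  obtain \<beta> where \<beta>: "0 < \<beta>" "\<And>x. proj_sup x \<le> \<beta> * norm x"
    using basis_constant by blast
  have "\<bar>coeff x n\<bar> * norm (e n) \<le> 2 * \<beta> * norm x" for x n
  proof -
    have "\<bar>coeff x n\<bar> * norm (e n) \<le> 2 * proj_sup x" by (rule abs_coeff_le_proj_sup)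
    also have "\<dots> \<le> 2 * (\<beta> * norm x)" using \<beta>(2) by simp
    finally show ?thesis by (simp add: mult.assoc)
  qed
  moreover have "0 < 2 * \<beta>" using \<beta>(1) by simp
  ultimately show thesis using that by blast
qed

lemma bounded_linear_coeff: "bounded_linear (\<lambda>x. coeff x n)"
proof -
  obtain \<beta> where "0 < \<beta>" "\<And>x n. \<bar>coeff x n\<bar> * norm (e n) \<le> \<beta> * norm x"
    using abs_coeff_le_norm by blast
  then have "norm (coeff x n) \<le> norm x * (\<beta> / norm (e n))" for x
    using basis_nonzero[of n] by (simp add: field_simps)
  then show ?thesis
    by (intro bounded_linear_intro[where K = "\<beta> / norm (e n)"]) (simp_all add: coeff_add coeff_scaleR)
qed

definition coeff_functional :: "nat \<Rightarrow> 'a \<Rightarrow>\<^sub>L real" where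
  "coeff_functional n = Blinfun (\<lambda>x. coeff x n)"

lemma coeff_functional_apply [simp]: "coeff_functional n x = coeff x n"
  by (simp add: coeff_functional_def bounded_linear_Blinfun_apply[OF bounded_linear_coeff])

lemma norm_coeff_functional_bounded:
  assumes "seminormalized e"
  obtains K where "\<And>n. norm (coeff_functional n) \<le> K"
proof -
  obtain a where a: "0 < a" "\<And>n. a \<le> norm (e n)"
    using assms unfolding seminormalized_def by blast
  obtain \<beta> where \<beta>: "0 < \<beta>" "\<And>x n. \<bar>coeff x n\<bar> * norm (e n) \<le> \<beta> * norm x"
    using abs_coeff_le_norm by blast
  have "\<bar>coeff x n\<bar> \<le> \<beta> / a * norm x" for x n
  proof -
    have "\<bar>coeff x n\<bar> * a \<le> \<beta> * norm x"
      using \<beta>(2)[of x n] mult_left_mono[OF a(2)[of n], of "\<bar>coeff x n\<bar>"] by linarith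
    then show ?thesis using a(1) by (simp add: field_simps)
  qed
  then have "norm (coeff_functional n) \<le> \<beta> / a" for n
    using a(1) \<beta>(1) by (intro norm_blinfun_bound) simp_all
  then show thesis by (rule that)
qed

definition basis_operator :: "(nat \<Rightarrow> 'b::banach) \<Rightarrow> 'a \<Rightarrow> 'b" where
  "basis_operator d x = (\<Sum>i. coeff x i *\<^sub>R d i)"

context
  fixes d :: "nat \<Rightarrow> 'b::banach" and G :: real
  assumes dominated: "\<And>b N. norm (\<Sum>i<N. b i *\<^sub>R d i) \<le> G * norm (\<Sum>i<N. b i *\<^sub>R e i)"
begin

lemma basis_operator_sums: "(\<lambda>i. coeff x i *\<^sub>R d i) sums basis_operator d x"
proof -
  have "summable (\<lambda>i. coeff x i *\<^sub>R d i)"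
    unfolding summable_Cauchy
  proof (intro allI impI)
    fix \<epsilon> :: real assume "0 < \<epsilon>"
    then have "0 < \<epsilon> / (\<bar>G\<bar> + 1)" by simp
    then obtain N where N: "\<forall>m\<ge>N. \<forall>n. norm (sum (\<lambda>i. coeff x i *\<^sub>R e i) {m..<n}) < \<epsilon> / (\<bar>G\<bar> + 1)"
      using sums_summable[OF coeff_sums, of x] unfolding summable_Cauchy by blast
    have "norm (sum (\<lambda>i. coeff x i *\<^sub>R d i) {m..<n}) < \<epsilon>" if "N \<le> m" for m n
    proof -
      have "norm (sum (\<lambda>i. coeff x i *\<^sub>R d i) {m..<n}) \<le> G * norm (sum (\<lambda>i. coeff x i *\<^sub>R e i) {m..<n})"
        unfolding sum_atLeastLessThan_as_lessThan by (rule dominated)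
      also have "\<dots> \<le> \<bar>G\<bar> * norm (sum (\<lambda>i. coeff x i *\<^sub>R e i) {m..<n})"
        by (intro mult_right_mono) simp_all
      also have "\<dots> \<le> \<bar>G\<bar> * (\<epsilon> / (\<bar>G\<bar> + 1))"
        using N that by (intro mult_left_mono) (simp_all add: less_imp_le)
      also have "\<dots> < \<epsilon>"
        using \<open>0 < \<epsilon>\<close> by (simp add: field_simps)
      finally show ?thesis .
    qed
    then show "\<exists>N. \<forall>m\<ge>N. \<forall>n. norm (sum (\<lambda>i. coeff x i *\<^sub>R d i) {m..<n}) < \<epsilon>" by blast
  qed
  then show ?thesis unfolding basis_operator_def by (rule summable_sums)
qed

lemma norm_basis_operator_le: "norm (basis_operator d x) \<le> G * norm x"
proof (rule LIMSEQ_le)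
  show "(\<lambda>N. norm (\<Sum>i<N. coeff x i *\<^sub>R d i)) \<longlonglongrightarrow> norm (basis_operator d x)"
    using basis_operator_sums unfolding sums_def by (rule tendsto_norm)
  show "(\<lambda>N. G * norm (proj N x)) \<longlonglongrightarrow> G * norm x"
    by (intro tendsto_mult tendsto_const tendsto_norm proj_tendsto)
  show "\<exists>N. \<forall>n\<ge>N. norm (\<Sum>i<n. coeff x i *\<^sub>R d i) \<le> G * norm (proj n x)"
    unfolding proj_def using dominated by blast
qed

lemma basis_operator_add: "basis_operator d (x + y) = basis_operator d x + basis_operator d y"
proof -
  have "(\<lambda>i. coeff (x + y) i *\<^sub>R d i) sums (basis_operator d x + basis_operator d y)"
    using sums_add[OF basis_operator_sums basis_operator_sums] by (simp add: coeff_add scaleR_add_left)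
  then show ?thesis using basis_operator_sums by (rule sums_unique2[symmetric])
qed

lemma basis_operator_scaleR: "basis_operator d (r *\<^sub>R x) = r *\<^sub>R basis_operator d x"
proof -
  have "(\<lambda>i. coeff (r *\<^sub>R x) i *\<^sub>R d i) sums (r *\<^sub>R basis_operator d x)"
    using sums_scaleR_right[OF basis_operator_sums] by (simp add: coeff_scaleR)
  then show ?thesis using basis_operator_sums by (rule sums_unique2[symmetric])
qed

lemma bounded_linear_basis_operator: "bounded_linear (basis_operator d)"
  by (intro bounded_linear_intro[where K = G])
    (simp_all add: basis_operator_add basis_operator_scaleR norm_basis_operator_le mult.commute)

lemma basis_operator_basis: "basis_operator d (e j) = d j"
proof -
  have "(\<lambda>i. coeff (e j) i *\<^sub>R d i) = (\<lambda>i. if i = j then d i else 0)"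
    by (simp add: coeff_basis fun_eq_iff)
  then have "(\<lambda>i. coeff (e j) i *\<^sub>R d i) sums d j"
    using sums_single[of j d] by simp
  then show ?thesis using basis_operator_sums by (rule sums_unique2[symmetric])
qed

end

context
  fixes d :: "nat \<Rightarrow> 'b::banach" and G :: real
  assumes multiplier_bound: "\<And>t c b N. (\<And>i. \<bar>t i\<bar> \<le> c) \<Longrightarrow>
      norm (\<Sum>i<N. b i *\<^sub>R (t i *\<^sub>R d i)) \<le> G * c * norm (\<Sum>i<N. b i *\<^sub>R e i)"
    and nonneg: "0 \<le> G"
begin

definition multiplier_operator :: "(nat \<Rightarrow>\<^sub>C real) \<Rightarrow> 'a \<Rightarrow>\<^sub>L 'b" where
  "multiplier_operator t = Blinfun (basis_operator (\<lambda>i. t i *\<^sub>R d i))"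

lemma multiplier_dominated:
  fixes t :: "nat \<Rightarrow>\<^sub>C real"
  shows "norm (\<Sum>i<N. b i *\<^sub>R (t i *\<^sub>R d i)) \<le> G * norm t * norm (\<Sum>i<N. b i *\<^sub>R e i)"
  using multiplier_bound[of "apply_bcontfun t"] norm_bounded[of t] by simp

lemma multiplier_operator_apply:
  "blinfun_apply (multiplier_operator t) = basis_operator (\<lambda>i. t i *\<^sub>R d i)"
  unfolding multiplier_operator_def
  by (rule bounded_linear_Blinfun_apply[OF bounded_linear_basis_operator[OF multiplier_dominated]])

lemma multiplier_operator_basis: "multiplier_operator t (e j) = t j *\<^sub>R d j"
  by (simp add: multiplier_operator_apply basis_operator_basis[OF multiplier_dominated])

lemma bounded_linear_multiplier_operator: "bounded_linear multiplier_operator"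
proof (rule bounded_linear_intro[where K = G])
  note sums = basis_operator_sums[OF multiplier_dominated]
  show "multiplier_operator (t + s) = multiplier_operator t + multiplier_operator s" for t s
  proof (rule blinfun_eqI)
    fix x
    have "(\<lambda>i. coeff x i *\<^sub>R ((t + s) i *\<^sub>R d i)) sums (multiplier_operator t x + multiplier_operator s x)"
      using sums_add[OF sums[of x t] sums[of x s]] by (simp add: multiplier_operator_apply algebra_simps)
    then show "multiplier_operator (t + s) x = (multiplier_operator t + multiplier_operator s) x"
      unfolding multiplier_operator_apply plus_blinfun.rep_eq by (rule sums_unique2[OF sums])
  qed
  show "multiplier_operator (r *\<^sub>R t) = r *\<^sub>R multiplier_operator t" for r t
  proof (rule blinfun_eqI)
    fix x
    have "(\<lambda>i. coeff x i *\<^sub>R ((r *\<^sub>R t) i *\<^sub>R d i)) sums (r *\<^sub>R multiplier_operator t x)"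
      using sums_scaleR_right[OF sums[of x t], of r] by (simp add: multiplier_operator_apply algebra_simps)
    then show "multiplier_operator (r *\<^sub>R t) x = (r *\<^sub>R multiplier_operator t) x"
      unfolding multiplier_operator_apply scaleR_blinfun.rep_eq by (rule sums_unique2[OF sums])
  qed
  show "norm (multiplier_operator t) \<le> norm t * G" for t
    using norm_basis_operator_le[OF multiplier_dominated] nonneg
    by (intro norm_blinfun_bound) (simp_all add: multiplier_operator_apply mult_ac)
qed

end

end

section \<open>Quasisubsymmetric sequences\<close>

lemma norm_sum_le_vertex_bound:
  fixes v :: "nat \<Rightarrow> 'a::real_normed_vector"
  assumes vertices: "\<And>w. norm (u + (\<Sum>i<N. of_bool (w i) *\<^sub>R v i)) \<le> B"
    and t: "\<And>i. 0 \<le> t i" "\<And>i. t i \<le> 1"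
  shows "norm (u + (\<Sum>i<N. t i *\<^sub>R v i)) \<le> B"
  using vertices
proof (induction N arbitrary: u)
  case 0
  then show ?case by simp
next
  case (Suc N)
  have update: "(\<Sum>i<N. of_bool ((w(N := b)) i) *\<^sub>R v i) = (\<Sum>i<N. of_bool (w i) *\<^sub>R v i)"
    for w b by (intro sum.cong) auto
  have "norm (u + (\<Sum>i<N. of_bool (w i) *\<^sub>R v i)) \<le> B"
    and "norm ((u + v N) + (\<Sum>i<N. of_bool (w i) *\<^sub>R v i)) \<le> B" for w
    using Suc.prems[of "w(N := False)"] Suc.prems[of "w(N := True)"]
    by (simp_all add: update algebra_simps)
  then have bound0: "norm (u + (\<Sum>i<N. t i *\<^sub>R v i)) \<le> B"
    and bound1: "norm ((u + v N) + (\<Sum>i<N. t i *\<^sub>R v i)) \<le> B"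
    using Suc.IH by blast+
  have "u + (\<Sum>i<Suc N. t i *\<^sub>R v i)
      = (1 - t N) *\<^sub>R (u + (\<Sum>i<N. t i *\<^sub>R v i)) + t N *\<^sub>R ((u + v N) + (\<Sum>i<N. t i *\<^sub>R v i))"
    by (simp add: algebra_simps)
  also have "norm \<dots> \<le> (1 - t N) * B + t N * B"
    using t[of N] bound0 bound1
    by (intro order_trans[OF norm_triangle_ineq] add_mono) (simp_all add: mult_left_mono)
  finally show ?case by (simp add: algebra_simps)
qed

lemma norm_sum_le_bounded_coeffs:
  fixes v :: "nat \<Rightarrow> 'a::real_normed_vector"
  assumes vertices: "\<And>w. norm (\<Sum>i<N. of_bool (w i) *\<^sub>R v i) \<le> B"
    and t: "\<And>i. \<bar>t i\<bar> \<le> c"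
  shows "norm (\<Sum>i<N. t i *\<^sub>R v i) \<le> 2 * c * B"
proof (cases "c = 0")
  case True
  then show ?thesis using t by simp
next
  case False
  then have "0 < c" using t[of 0] by linarith
  have part: "norm (\<Sum>i<N. s i *\<^sub>R v i) \<le> c * B" if "\<And>i. 0 \<le> s i" "\<And>i. s i \<le> c" for s
  proof -
    have "norm (0 + (\<Sum>i<N. (s i / c) *\<^sub>R v i)) \<le> B"
      by (rule norm_sum_le_vertex_bound) (use vertices that \<open>0 < c\<close> in auto)
    then have "norm (inverse c *\<^sub>R (\<Sum>i<N. s i *\<^sub>R v i)) \<le> B"
      by (simp add: scaleR_sum_right divide_inverse_commute)
    then show ?thesis using \<open>0 < c\<close> by (simp add: field_simps)
  qed
  have "(\<Sum>i<N. t i *\<^sub>R v i) = (\<Sum>i<N. max (t i) 0 *\<^sub>R v i) - (\<Sum>i<N. max (- t i) 0 *\<^sub>R v i)"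
    unfolding sum_subtractf[symmetric] scaleR_diff_left[symmetric] by (intro sum.cong) auto
  also have "norm \<dots> \<le> c * B + c * B"
    using t \<open>0 < c\<close> by (intro order_trans[OF norm_triangle_ineq4] add_mono part) (auto simp: abs_le_iff)
  finally show ?thesis by (simp add: mult_ac)
qed

lemma coherent_prefixes_limit:
  fixes S :: "nat \<Rightarrow> nat \<Rightarrow> 'b" and M :: "nat \<Rightarrow> nat"
  assumes coherent: "\<And>k j. j < M k \<Longrightarrow> S (Suc k) j = S k j" and "strict_mono M"
  obtains t where "\<And>k j. j < M k \<Longrightarrow> t j = S k j"
proof
  have later: "S k' j = S k j" if "j < M k" "k \<le> k'" for k k' j
    using that(2)
  proof (induction k' rule: dec_induct)
    case (step k')
    have "M k \<le> M k'" using step.hyps(1) \<open>strict_mono M\<close> by (simp add: strict_mono_less_eq)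
    then have "j < M k'" using \<open>j < M k\<close> by linarith
    then show ?case using coherent step.IH by simp
  qed simp
  fix k j assume "j < M k"
  have "j < M (Suc j)"
    using strict_mono_imp_increasing[OF \<open>strict_mono M\<close>, of "Suc j"] by simp
  then have "S (max k (Suc j)) j = S (Suc j) j" by (rule later) simp
  moreover have "S (max k (Suc j)) j = S k j" using \<open>j < M k\<close> by (rule later) simp
  ultimately show "S (Suc j) j = S k j" by simp
qed

lemma uniform_bound_on_cylinder:
  fixes f :: "(nat \<Rightarrow> bool) \<Rightarrow> 'i \<Rightarrow> real" and g :: "'i \<Rightarrow> real"
  assumes local: "\<And>i. \<exists>n. \<forall>t t'. (\<forall>j<n. t j = t' j) \<longrightarrow> f t i = f t' i"
    and g: "\<And>i. 0 \<le> g i"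
    and bounded: "\<And>t. \<exists>C. \<forall>i. f t i \<le> C * g i"
  shows "\<exists>K M s. \<forall>t. (\<forall>j<M. t j = s j) \<longrightarrow> (\<forall>i. f t i \<le> K * g i)"
proof (rule ccontr)
  assume "\<not> ?thesis"
  then have "\<forall>K M s. \<exists>t i. (\<forall>j<M. t j = s j) \<and> K * g i < f t i"
    by (auto simp: not_le)
  then obtain T I where TI: "\<And>K M s. (\<forall>j<M. T K M s j = s j) \<and> K * g (I K M s) < f (T K M s) (I K M s)"
    by metis
  obtain n where n: "\<And>i t t'. (\<forall>j<n i. t j = t' j) \<Longrightarrow> f t i = f t' i"
    using local by metis
  \<comment> \<open>Step k extends the prefix of length M k by a counterexample for the constant k and
    lengthens it so that the limit sequence still violates that inequality.\<close>
  define step where "step k p = (let (s, m) = p; i = I (real k) m s in (T (real k) m s, max (Suc m) (n i)))"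
    for k and p :: "(nat \<Rightarrow> bool) \<times> nat"
  define P where "P = rec_nat ((\<lambda>_. False), 0) step"
  define S where "S k = fst (P k)" for k
  define M where "M k = snd (P k)" for k
  define i where "i k = I (real k) (M k) (S k)" for k
  have S_Suc: "S (Suc k) = T (real k) (M k) (S k)" and M_Suc: "M (Suc k) = max (Suc (M k)) (n (i k))" for k
    by (simp_all add: S_def M_def P_def step_def i_def split_beta)
  have coherent: "S (Suc k) j = S k j" if "j < M k" for k j
    using TI that by (simp add: S_Suc)
  have "strict_mono M" by (rule strict_monoI_Suc) (simp add: M_Suc)
  then obtain t where t: "\<And>k j. j < M k \<Longrightarrow> t j = S k j"
    using coherent_prefixes_limit[of M S, OF coherent] by blast
  obtain C where C: "\<And>i. f t i \<le> C * g i" using bounded by blast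
  obtain k :: nat where "C \<le> real k" using real_arch_simple by blast
  have "f t (i k) = f (S (Suc k)) (i k)"
    by (rule n) (simp add: t M_Suc)
  also have "\<dots> > real k * g (i k)"
    using TI by (simp add: S_Suc i_def)
  finally have "real k * g (i k) < f t (i k)" .
  moreover have "f t (i k) \<le> real k * g (i k)"
    using C[of "i k"] mult_right_mono[OF \<open>C \<le> real k\<close> g[of "i k"]] by linarith
  ultimately show False by simp
qed

lemma sum_zero_padded_shift:
  fixes f :: "nat \<Rightarrow> 'a::comm_monoid_add"
  shows "(\<Sum>j<N + M. if j < M then 0 else f (j - M)) = (\<Sum>i<N. f i)"
  by (induction N) simp_all

lemma quasisubsymmetric_dominates:
  fixes e :: "nat \<Rightarrow> 'a::real_normed_vector" and k l :: "nat \<Rightarrow> nat"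
  assumes "quasisubsymmetric e" "strict_mono k" "strict_mono l" "\<And>n. k n \<le> l n"
  shows "\<exists>C. \<forall>a N. norm (\<Sum>n<N. a n *\<^sub>R e (l n)) \<le> C * norm (\<Sum>n<N. a n *\<^sub>R e (k n))"
proof -
  have "dominates (e \<circ> k) (e \<circ> l)"
    using assms unfolding quasisubsymmetric_def by blast
  then show ?thesis unfolding dominates_def comp_def by blast
qed

lemma quasisubsymmetric_uniform_on_cylinder:
  fixes e :: "nat \<Rightarrow> 'a::real_normed_vector"
  assumes "quasisubsymmetric e"
  obtains K M s where "\<And>w b N. (\<And>j. j < M \<Longrightarrow> w j = s j) \<Longrightarrow>
    norm (\<Sum>j<N. b j *\<^sub>R e (2 * j + of_bool (w j))) \<le> K * norm (\<Sum>j<N. b j *\<^sub>R e (2 * j))"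
proof -
  define f where "f w p = norm (\<Sum>j<snd p. fst p j *\<^sub>R e (2 * j + of_bool (w j)))"
    for w and p :: "(nat \<Rightarrow> real) \<times> nat"
  define g where "g p = norm (\<Sum>j<snd p. fst p j *\<^sub>R e (2 * j))" for p :: "(nat \<Rightarrow> real) \<times> nat"
  have "\<exists>K M s. \<forall>w. (\<forall>j<M. w j = s j) \<longrightarrow> (\<forall>p. f w p \<le> K * g p)"
  proof (rule uniform_bound_on_cylinder)
    show "\<exists>n. \<forall>w w'. (\<forall>j<n. w j = w' j) \<longrightarrow> f w p = f w' p" for p
      by (auto simp: f_def intro!: exI[of _ "snd p"] sum.cong)
    show "0 \<le> g p" for p by (simp add: g_def)
    show "\<exists>C. \<forall>p. f w p \<le> C * g p" for w
    proof -
      have "strict_mono (\<lambda>j::nat. 2 * j)" by (rule strict_monoI) simp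
      moreover have "strict_mono (\<lambda>j::nat. 2 * j + of_bool (w j))"
        by (rule strict_monoI) (auto simp: of_bool_def split: if_splits)
      ultimately obtain C where "\<forall>a N. norm (\<Sum>j<N. a j *\<^sub>R e (2 * j + of_bool (w j)))
          \<le> C * norm (\<Sum>j<N. a j *\<^sub>R e (2 * j))"
        using quasisubsymmetric_dominates[OF assms] by (metis le_add1)
      then show ?thesis by (auto simp: f_def g_def)
    qed
  qed
  then obtain K M s where K: "\<forall>w. (\<forall>j<M. w j = s j) \<longrightarrow> (\<forall>p. f w p \<le> K * g p)"
    by blast
  show thesis
  proof (rule that)
    fix w b N assume "\<And>j. j < M \<Longrightarrow> w j = s j"
    then show "norm (\<Sum>j<N. b j *\<^sub>R e (2 * j + of_bool (w j))) \<le> K * norm (\<Sum>j<N. b j *\<^sub>R e (2 * j))"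
      using K[rule_format, of w "(b, N)"] by (simp add: f_def g_def)
  qed
qed

lemma quasisubsymmetric_uniform_on_tail:
  fixes e :: "nat \<Rightarrow> 'a::real_normed_vector"
  assumes "quasisubsymmetric e"
  obtains K M where "0 \<le> K"
    "\<And>w b N. norm (\<Sum>i<N. b i *\<^sub>R e (2 * (i + M) + of_bool (w i)))
      \<le> K * norm (\<Sum>i<N. b i *\<^sub>R e (2 * (i + M)))"
proof -
  obtain K M s where K: "\<And>w b N. (\<And>j. j < M \<Longrightarrow> w j = s j) \<Longrightarrow>
    norm (\<Sum>j<N. b j *\<^sub>R e (2 * j + of_bool (w j))) \<le> K * norm (\<Sum>j<N. b j *\<^sub>R e (2 * j))"
    by (rule quasisubsymmetric_uniform_on_cylinder[OF assms]) auto
  have "norm (\<Sum>i<N. b i *\<^sub>R e (2 * (i + M) + of_bool (w i)))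
      \<le> max K 0 * norm (\<Sum>i<N. b i *\<^sub>R e (2 * (i + M)))"
    for w b N
  proof -
    \<comment> \<open>Pad with the prefix s and zero coefficients, so that the cylinder bound applies.\<close>
    define w' where "w' j = (if j < M then s j else w (j - M))" for j
    define b' where "b' j = (if j < M then 0 else b (j - M))" for j
    have "(\<Sum>j<N + M. b' j *\<^sub>R e (2 * j + of_bool (w' j)))
        = (\<Sum>j<N + M. if j < M then 0 else b (j - M) *\<^sub>R e (2 * ((j - M) + M) + of_bool (w (j - M))))"
      by (intro sum.cong) (auto simp: b'_def w'_def)
    also have "\<dots> = (\<Sum>i<N. b i *\<^sub>R e (2 * (i + M) + of_bool (w i)))"
      by (rule sum_zero_padded_shift[where f = "\<lambda>i. b i *\<^sub>R e (2 * (i + M) + of_bool (w i))"])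
    finally have shifted: "(\<Sum>j<N + M. b' j *\<^sub>R e (2 * j + of_bool (w' j)))
        = (\<Sum>i<N. b i *\<^sub>R e (2 * (i + M) + of_bool (w i)))" .
    have "(\<Sum>j<N + M. b' j *\<^sub>R e (2 * j))
        = (\<Sum>j<N + M. if j < M then 0 else b (j - M) *\<^sub>R e (2 * ((j - M) + M)))"
      by (intro sum.cong) (auto simp: b'_def)
    also have "\<dots> = (\<Sum>i<N. b i *\<^sub>R e (2 * (i + M)))"
      by (rule sum_zero_padded_shift[where f = "\<lambda>i. b i *\<^sub>R e (2 * (i + M))"])
    finally have shifted0: "(\<Sum>j<N + M. b' j *\<^sub>R e (2 * j)) = (\<Sum>i<N. b i *\<^sub>R e (2 * (i + M)))" .
    have "norm (\<Sum>j<N + M. b' j *\<^sub>R e (2 * j + of_bool (w' j)))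
        \<le> K * norm (\<Sum>j<N + M. b' j *\<^sub>R e (2 * j))"
      by (rule K) (simp add: w'_def)
    also have "\<dots> \<le> max K 0 * norm (\<Sum>j<N + M. b' j *\<^sub>R e (2 * j))"
      by (intro mult_right_mono) simp_all
    finally show ?thesis unfolding shifted shifted0 .
  qed
  then show thesis by (rule that[rotated]) simp
qed

lemma quasisubsymmetric_multiplier_bound:
  fixes e :: "nat \<Rightarrow> 'a::real_normed_vector"
  assumes "quasisubsymmetric e"
  obtains M G where "0 \<le> G"
    "\<And>t c b N. (\<And>i. \<bar>t i\<bar> \<le> c) \<Longrightarrow>
      norm (\<Sum>i<N. b i *\<^sub>R (t i *\<^sub>R (e (2 * (i + M) + 1) - e (2 * (i + M)))))
        \<le> G * c * norm (\<Sum>i<N. b i *\<^sub>R e i)"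
proof -
  obtain K M where K: "0 \<le> K"
    "\<And>w b N. norm (\<Sum>i<N. b i *\<^sub>R e (2 * (i + M) + of_bool (w i)))
      \<le> K * norm (\<Sum>i<N. b i *\<^sub>R e (2 * (i + M)))"
    by (rule quasisubsymmetric_uniform_on_tail[OF assms]) auto
  have "strict_mono (\<lambda>i::nat. i)" "strict_mono (\<lambda>i::nat. 2 * (i + M))" "i \<le> 2 * (i + M)" for i
    by (simp_all add: strict_mono_def)
  then obtain C where C: "\<And>b N. norm (\<Sum>i<N. b i *\<^sub>R e (2 * (i + M))) \<le> C * norm (\<Sum>i<N. b i *\<^sub>R e i)"
    using quasisubsymmetric_dominates[OF assms, of "\<lambda>i. i" "\<lambda>i. 2 * (i + M)"] by blast
  define d where "d i = e (2 * (i + M) + 1) - e (2 * (i + M))" for i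
  define W where "W w b N = (\<Sum>i<N. b i *\<^sub>R e (2 * (i + M) + of_bool (w i)))" for w b N
  have W_le: "norm (W w b N) \<le> K * \<bar>C\<bar> * norm (\<Sum>i<N. b i *\<^sub>R e i)" for w b N
  proof -
    have "norm (W w b N) \<le> K * norm (\<Sum>i<N. b i *\<^sub>R e (2 * (i + M)))"
      unfolding W_def by (rule K(2))
    also have "\<dots> \<le> K * (\<bar>C\<bar> * norm (\<Sum>i<N. b i *\<^sub>R e i))"
      using C[of b N] K(1) by (meson abs_ge_self mult_left_mono mult_right_mono norm_ge_zero order_trans)
    finally show ?thesis by (simp add: mult.assoc)
  qed
  have vertices:
    "norm (\<Sum>i<N. of_bool (w i) *\<^sub>R (b i *\<^sub>R d i)) \<le> 2 * K * \<bar>C\<bar> * norm (\<Sum>i<N. b i *\<^sub>R e i)"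
    for w b N
  proof -
    have "(\<Sum>i<N. of_bool (w i) *\<^sub>R (b i *\<^sub>R d i)) = W w b N - W (\<lambda>_. False) b N"
      unfolding W_def d_def sum_subtractf[symmetric] by (intro sum.cong) (auto simp: algebra_simps)
    also have "norm \<dots> \<le> K * \<bar>C\<bar> * norm (\<Sum>i<N. b i *\<^sub>R e i) + K * \<bar>C\<bar> * norm (\<Sum>i<N. b i *\<^sub>R e i)"
      by (intro order_trans[OF norm_triangle_ineq4] add_mono W_le)
    finally show ?thesis by simp
  qed
  have "norm (\<Sum>i<N. b i *\<^sub>R (t i *\<^sub>R d i)) \<le> (4 * K * \<bar>C\<bar>) * c * norm (\<Sum>i<N. b i *\<^sub>R e i)"
    if "\<And>i. \<bar>t i\<bar> \<le> c" for t c b N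
  proof -
    have "norm (\<Sum>i<N. t i *\<^sub>R (b i *\<^sub>R d i)) \<le> 2 * c * (2 * K * \<bar>C\<bar> * norm (\<Sum>i<N. b i *\<^sub>R e i))"
      using vertices that by (rule norm_sum_le_bounded_coeffs)
    then show ?thesis by (simp add: mult_ac)
  qed
  moreover have "0 \<le> 4 * K * \<bar>C\<bar>" using K(1) by simp
  ultimately show thesis using that unfolding d_def by blast
qed

section \<open>Embedding of bounded sequences\<close>

definition blinfun_adjoint ::
    "('a::real_normed_vector \<Rightarrow>\<^sub>L 'b::real_normed_vector) \<Rightarrow> ('b \<Rightarrow>\<^sub>L real) \<Rightarrow>\<^sub>L ('a \<Rightarrow>\<^sub>L real)"
  where
  "blinfun_adjoint A = bounded_bilinear.prod_left (o\<^sub>L) A"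

lemma blinfun_adjoint_apply: "blinfun_adjoint A \<phi> = \<phi> o\<^sub>L A"
  by (simp add: blinfun_adjoint_def bounded_bilinear.prod_left.rep_eq[OF bounded_bilinear_blinfun_compose])

lemma bounded_linear_blinfun_adjoint: "bounded_linear blinfun_adjoint"
  unfolding blinfun_adjoint_def
  by (rule bounded_bilinear.bounded_linear_prod_left[OF bounded_bilinear_blinfun_compose])

lemma embeds_isomorphically_blinfun_adjoint:
  fixes D :: "(nat \<Rightarrow>\<^sub>C real) \<Rightarrow> ('a::real_normed_vector \<Rightarrow>\<^sub>L 'b::real_normed_vector)"
    and \<phi> :: "nat \<Rightarrow> 'b \<Rightarrow>\<^sub>L real" and x :: "nat \<Rightarrow> 'a"
  assumes D: "bounded_linear D"
    and bounded: "\<And>j. norm (\<phi> j) * norm (x j) \<le> C"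
    and recover: "\<And>t j. \<bar>apply_bcontfun t j\<bar> \<le> \<bar>\<phi> j (D t (x j))\<bar>"
  shows "embeds_isomorphically (\<lambda>t. blinfun_adjoint (D t))"
proof -
  define T where "T t = blinfun_adjoint (D t)" for t
  have "bounded_linear T"
    unfolding T_def[abs_def] using bounded_linear_blinfun_adjoint D by (rule bounded_linear_compose)
  moreover have lower: "norm t \<le> C * norm (T t)" for t
  proof (rule norm_bound)
    fix j
    have "\<bar>t j\<bar> \<le> norm (T t (\<phi> j) (x j))"
      using recover[of t j] by (simp add: T_def blinfun_adjoint_apply)
    also have "\<dots> \<le> norm (T t (\<phi> j)) * norm (x j)"
      by (rule norm_blinfun)
    also have "\<dots> \<le> norm (T t) * norm (\<phi> j) * norm (x j)"
      by (intro mult_right_mono norm_blinfun norm_ge_zero)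
    also have "\<dots> \<le> norm (T t) * C"
      using bounded[of j] by (simp add: mult.assoc mult_left_mono)
    finally show "norm (t j) \<le> C * norm (T t)" by (simp add: mult.commute)
  qed
  have pos: "0 < \<bar>C\<bar> + 1" by simp
  have "1 / (\<bar>C\<bar> + 1) * norm t \<le> norm (T t)" for t
  proof -
    have "C * norm (T t) \<le> (\<bar>C\<bar> + 1) * norm (T t)"
      by (intro mult_right_mono) simp_all
    then have "norm t \<le> (\<bar>C\<bar> + 1) * norm (T t)"
      using lower[of t] by linarith
    then show ?thesis using pos by (simp add: field_simps)
  qed
  moreover have "0 < 1 / (\<bar>C\<bar> + 1)" using pos by simp
  ultimately show ?thesis
    unfolding embeds_isomorphically_def T_def by blast
qed

theorem corollary2p6:
  fixes e :: "nat \<Rightarrow> 'a::banach"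
  assumes "schauder_basis e" and "seminormalized e" and "quasisubsymmetric e"
  shows "\<exists>T :: (nat \<Rightarrow>\<^sub>C real) \<Rightarrow> (('a \<Rightarrow>\<^sub>L real) \<Rightarrow>\<^sub>L ('a \<Rightarrow>\<^sub>L real)).
           embeds_isomorphically T"
proof -
  interpret schauder e by (rule schauder.intro) fact
  obtain G M where "0 \<le> G" and bound: "\<And>t c b N. (\<And>i. \<bar>t i\<bar> \<le> c) \<Longrightarrow>
      norm (\<Sum>i<N. b i *\<^sub>R (t i *\<^sub>R (e (2 * (i + M) + 1) - e (2 * (i + M)))))
        \<le> G * c * norm (\<Sum>i<N. b i *\<^sub>R e i)"
    by (rule quasisubsymmetric_multiplier_bound[OF assms(3)]) auto
  define D where "D = multiplier_operator (\<lambda>i. e (2 * (i + M) + 1) - e (2 * (i + M)))"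
  have D: "bounded_linear D"
    unfolding D_def using bound \<open>0 \<le> G\<close> by (rule bounded_linear_multiplier_operator)
  obtain K where K: "\<And>n. norm (coeff_functional n) \<le> K"
    using norm_coeff_functional_bounded[OF assms(2)] by blast
  obtain B where B: "\<And>n. norm (e n) \<le> B"
    using assms(2) unfolding seminormalized_def by blast
  have bounded: "norm (coeff_functional (2 * (j + M))) * norm (e j) \<le> K * B" for j
    using K B by (meson mult_mono norm_ge_zero order_trans)
  have recover: "\<bar>t j\<bar> \<le> \<bar>coeff_functional (2 * (j + M)) (D t (e j))\<bar>"
    for t :: "nat \<Rightarrow>\<^sub>C real" and j
  proof -
    have "D t (e j) = t j *\<^sub>R (e (2 * (j + M) + 1) - e (2 * (j + M)))"
      unfolding D_def using bound \<open>0 \<le> G\<close> by (rule multiplier_operator_basis)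
    then show ?thesis by (simp add: coeff_scaleR coeff_diff coeff_basis)
  qed
  show ?thesis
    using embeds_isomorphically_blinfun_adjoint[OF D bounded recover] by blast
qed

end
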